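(* Let $k,t\ge1$ with $t$ a power of two and $k\le t/6$. Then there exists a valid perfect randomized $[t,k]$-interval system $\mathcal{F}$ with $\mathrm{val}(\mathcal{F})\le \dfrac{10k^2\log(t)}{t}$ (logarithm base 2).
   Context: An interval is a nonempty set $\{a,\ldots,b\}$ of integers; a $[t,k]$-interval system is a set of $k$ pairwise disjoint intervals contained in $[t]$; a randomized one is a distribution over such systems. $\mathrm{val}(F)=\sum_{I\in F}1/|I|$, $\mathrm{val}(\mathcal{F})=\mathbb{E}_{F\sim\mathcal{F}}\mathrm{val}(F)$. $\mathrm{Sets}(F)$ is the distribution of the set obtained by choosing independently a uniform element from each interval of $F$; $\mathrm{Sets}(\mathcal{F})$ samples $F\sim\mathcal{F}$ then a set from $\mathrm{Sets}(F)$. $\mathcal{F}$ is perfect if $\mathrm{Sets}(\mathcal{F})$ is uniform over all $k$-element subsets of $[t]$. $F$ is valid if $\sum_{I\in F}|I|\le t/2$; $\mathcal{F}$ is valid if all systems in its support are valid. *)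

theory Defs
  imports "HOL-Probability.Probability"
begin

text \<open>An interval is a nonempty set {a..b} of integers (here naturals, since
  all intervals considered lie in [t] = {1..t}).\<close>
definition is_interval :: "nat set \<Rightarrow> bool" where
  "is_interval I \<longleftrightarrow> (\<exists>a b. a \<le> b \<and> I = {a..b})"

definition interval_system :: "nat \<Rightarrow> nat \<Rightarrow> nat set set \<Rightarrow> bool" where
  "interval_system t k F \<longleftrightarrow>
     finite F \<and> card F = k \<and>
     (\<forall>I\<in>F. is_interval I \<and> I \<subseteq> {1..t}) \<and>
     (\<forall>I\<in>F. \<forall>J\<in>F. I \<noteq> J \<longrightarrow> I \<inter> J = {})"

definition val_sys :: "nat set set \<Rightarrow> real" where
  "val_sys F = (\<Sum>I\<in>F. 1 / real (card I))"

definition val_rand :: "nat set set pmf \<Rightarrow> real" where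
  "val_rand \<F> = measure_pmf.expectation \<F> val_sys"

definition Sets_sys :: "nat set set \<Rightarrow> nat set pmf" where
  "Sets_sys F = map_pmf (\<lambda>f. f ` F) (Pi_pmf F undefined (\<lambda>I. pmf_of_set I))"

definition Sets_rand :: "nat set set pmf \<Rightarrow> nat set pmf" where
  "Sets_rand \<F> = bind_pmf \<F> Sets_sys"

definition perfect :: "nat \<Rightarrow> nat \<Rightarrow> nat set set pmf \<Rightarrow> bool" where
  "perfect t k \<F> \<longleftrightarrow> Sets_rand \<F> = pmf_of_set {S. S \<subseteq> {1..t} \<and> card S = k}"

definition valid_sys :: "nat \<Rightarrow> nat set set \<Rightarrow> bool" where
  "valid_sys t F \<longleftrightarrow> real (\<Sum>I\<in>F. card I) \<le> real t / 2"

definition valid_rand :: "nat \<Rightarrow> nat set set pmf \<Rightarrow> bool" where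
  "valid_rand t \<F> \<longleftrightarrow> (\<forall>F\<in>set_pmf \<F>. valid_sys t F)"

end

theory Submission
  imports Defs
begin

text \<open>Let \<open>t = 2 ^ m\<close> and draw a uniform \<open>k\<close>-subset \<open>S\<close> of \<open>{1..t}\<close>. The split level of
  \<open>s \<in> S\<close> is the least level at which the dyadic block of \<open>s\<close> contains another point of
  \<open>S\<close> (or \<open>m\<close>); each \<open>s\<close> receives the dyadic block three levels below. These intervals
  are pairwise disjoint, and the resulting family does not change when every \<open>s\<close> is replaced
  by an arbitrary point of its own interval. So the family determines its set of transversals,
  which is exactly the fibre of \<open>S\<close>, and resampling within fibres keeps the uniform
  distribution: the system is perfect. The blocks one level below the split levels are disjoint,
  so the intervals have total length at most \<open>t / 4 + k \<le> t / 2\<close>. Finally \<open>2 ^ (- split level)\<close>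
  is dominated by the affinity to the other points, which weighs each level \<open>l\<close> at which two
  points share a block by \<open>2 ^ (- l)\<close>; its expected total over pairs of \<open>S\<close> is at most
  \<open>k (k - 1) m / (t - 1)\<close>.\<close>

section \<open>Counting pairs in uniform random subsets\<close>

lemma of_nat_times_pred: "real (n * (n - 1)) = real n * (real n - 1)"
  by (cases n) (auto simp: algebra_simps)

lemma binomial_mult_pair:
  assumes "2 \<le> k"
  shows "(n choose k) * (k * (k - 1)) = n * (n - 1) * ((n - 2) choose (k - 2))"
proof -
  obtain j where k: "k = Suc (Suc j)"
    using assms by (metis add_2_eq_Suc le_Suc_ex)
  have "(n choose k) * (k * (k - 1)) = Suc j * (k * (n choose k))"
    by (simp add: k algebra_simps)
  also have "\<dots> = n * (Suc j * ((n - 1) choose Suc j))"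
    unfolding times_binomial_minus1_eq[of k n, OF zero_less_Suc[of "Suc j", folded k]]
    by (simp add: k algebra_simps)
  also have "\<dots> = n * (n - 1) * ((n - 2) choose (k - 2))"
    unfolding times_binomial_minus1_eq[OF zero_less_Suc] by (simp add: k diff_diff_add numeral_2_eq_2)
  finally show ?thesis .
qed

lemma card_subsets_containing_pair:
  assumes "finite U" "x \<in> U" "y \<in> U" "x \<noteq> y"
  shows "card {S. S \<subseteq> U \<and> card S = k \<and> x \<in> S \<and> y \<in> S} * (card U * (card U - 1)) =
    (card U choose k) * (k * (k - 1))"
proof (cases "2 \<le> k")
  case False
  have "2 \<le> card S" if "S \<subseteq> U" "x \<in> S" "y \<in> S" for S
    using card_mono[of S "{x, y}"] that assms(1,4) finite_subset[of S U] by auto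
  then have no_pairs: "{S. S \<subseteq> U \<and> card S = k \<and> x \<in> S \<and> y \<in> S} = {}"
    using False by auto
  have "k * (k - 1) = 0"
    using False by (cases k) auto
  then show ?thesis
    unfolding no_pairs by simp
next
  case True
  let ?P = "{B. B \<subseteq> U - {x, y} \<and> card B = k - 2}"
  have "{S. S \<subseteq> U \<and> card S = k \<and> x \<in> S \<and> y \<in> S} = (\<lambda>B. insert x (insert y B)) ` ?P"
  proof (intro equalityI subsetI)
    fix S
    assume S: "S \<in> {S. S \<subseteq> U \<and> card S = k \<and> x \<in> S \<and> y \<in> S}"
    then have "card (S - {x, y}) = k - 2" "S = insert x (insert y (S - {x, y}))"
      using assms(1,4) finite_subset[of S U] by (auto simp: card_Diff_subset)
    with S show "S \<in> (\<lambda>B. insert x (insert y B)) ` ?P"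
      by blast
  next
    fix S
    assume "S \<in> (\<lambda>B. insert x (insert y B)) ` ?P"
    then obtain B where B: "B \<subseteq> U - {x, y}" "card B = k - 2" "S = insert x (insert y B)"
      by auto
    moreover have "finite B"
      using B(1) assms(1) finite_subset by blast
    moreover have "x \<notin> B" "y \<notin> B"
      using B(1) by auto
    ultimately have "card S = k"
      using True assms(4) B(2,3) by simp
    with B assms(2,3) show "S \<in> {S. S \<subseteq> U \<and> card S = k \<and> x \<in> S \<and> y \<in> S}"
      by auto
  qed
  moreover have "inj_on (\<lambda>B. insert x (insert y B)) ?P"
    by (rule inj_onI) blast
  ultimately have "card {S. S \<subseteq> U \<and> card S = k \<and> x \<in> S \<and> y \<in> S} = (card U - 2) choose (k - 2)"
    using assms by (simp add: card_image n_subsets card_Diff_subset numeral_2_eq_2)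
  then show ?thesis
    using binomial_mult_pair[OF True, of "card U"] by (simp add: mult.commute)
qed

lemma sum_pairs_subset_eq:
  fixes f :: "'a \<Rightarrow> 'a \<Rightarrow> 'b::comm_monoid_add"
  assumes "finite U" "S \<subseteq> U"
  shows "(\<Sum>x\<in>S. \<Sum>y\<in>S - {x}. f x y) =
    (\<Sum>x\<in>U. \<Sum>y\<in>U - {x}. if x \<in> S \<and> y \<in> S then f x y else 0)"
proof -
  have "(\<Sum>x\<in>U. \<Sum>y\<in>U - {x}. if x \<in> S \<and> y \<in> S then f x y else 0) =
      (\<Sum>x\<in>U. if x \<in> S then \<Sum>y\<in>U - {x}. if y \<in> S then f x y else 0 else 0)"
    by (intro sum.cong) auto
  also have "\<dots> = (\<Sum>x\<in>U \<inter> S. \<Sum>y\<in>(U - {x}) \<inter> S. f x y)"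
    using assms(1) by (simp add: sum.inter_restrict)
  also have "\<dots> = (\<Sum>x\<in>S. \<Sum>y\<in>S - {x}. f x y)"
    using assms(2) by (intro sum.cong) auto
  finally show ?thesis ..
qed

lemma expectation_sum_pairs_uniform_subset:
  fixes f :: "'a \<Rightarrow> 'a \<Rightarrow> real"
  assumes "finite U" "k \<le> card U"
  shows "measure_pmf.expectation (pmf_of_set {S. S \<subseteq> U \<and> card S = k})
      (\<lambda>S. \<Sum>x\<in>S. \<Sum>y\<in>S - {x}. f x y) =
    real k * (real k - 1) / (real (card U) * (real (card U) - 1)) * (\<Sum>x\<in>U. \<Sum>y\<in>U - {x}. f x y)"
proof -
  define K where "K = {S. S \<subseteq> U \<and> card S = k}"
  define c where "c = real k * (real k - 1) / (real (card U) * (real (card U) - 1))"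
  have "finite K"
    using assms(1) by (simp add: K_def)
  have card_K: "card K = card U choose k"
    using assms(1) by (simp add: K_def n_subsets)
  then have "0 < card K"
    using assms(2) by simp
  then have "K \<noteq> {}"
    by auto
  have pairs: "real (card {S \<in> K. x \<in> S \<and> y \<in> S}) = c * card K"
    if "x \<in> U" "y \<in> U - {x}" for x y
  proof -
    have "real (card U) * (real (card U) - 1) \<noteq> 0"
      using that assms(1) card_mono[of U "{x, y}"] by auto
    moreover have "card {S \<in> K. x \<in> S \<and> y \<in> S} * (card U * (card U - 1)) = card K * (k * (k - 1))"
      using card_subsets_containing_pair[OF assms(1) that(1), of y k] that(2) card_K by (auto simp: K_def)
    then have "real (card {S \<in> K. x \<in> S \<and> y \<in> S}) * (real (card U) * (real (card U) - 1)) =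
        real (card K) * (real k * (real k - 1))"
      using of_nat_times_pred[of "card U"] of_nat_times_pred[of k] by (metis of_nat_mult)
    ultimately show ?thesis
      unfolding c_def by (simp add: field_simps)
  qed
  have "(\<Sum>S\<in>K. \<Sum>x\<in>S. \<Sum>y\<in>S - {x}. f x y) =
      (\<Sum>S\<in>K. \<Sum>x\<in>U. \<Sum>y\<in>U - {x}. if x \<in> S \<and> y \<in> S then f x y else 0)"
    using assms(1) by (intro sum.cong refl sum_pairs_subset_eq) (auto simp: K_def)
  also have "\<dots> = (\<Sum>x\<in>U. \<Sum>y\<in>U - {x}. \<Sum>S\<in>K. if x \<in> S \<and> y \<in> S then f x y else 0)"
    by (simp only: sum.swap[of _ K])
  also have "\<dots> = (\<Sum>x\<in>U. \<Sum>y\<in>U - {x}. f x y * (c * card K))"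
    using \<open>finite K\<close> pairs by (intro sum.cong refl) (simp add: sum.If_cases Int_def)
  also have "\<dots> = card K * (c * (\<Sum>x\<in>U. \<Sum>y\<in>U - {x}. f x y))"
    by (simp add: sum_distrib_left mult_ac)
  finally show ?thesis
    using \<open>0 < card K\<close> integral_pmf_of_set[OF \<open>K \<noteq> {}\<close> \<open>finite K\<close>]
    by (simp flip: K_def c_def)
qed

section \<open>Random transversals of disjoint families\<close>

definition transversals :: "'a set set \<Rightarrow> 'a set set" where
  "transversals F = (\<lambda>f. f ` F) ` PiE_dflt F undefined (\<lambda>I. I)"

lemma transversals_image:
  assumes "inj_on h S"
  shows "transversals (h ` S) = {g ` S | g. \<forall>s\<in>S. g s \<in> h s}"
proof (intro equalityI subsetI)
  fix T
  assume "T \<in> transversals (h ` S)"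
  then obtain f where "f \<in> PiE_dflt (h ` S) undefined (\<lambda>I. I)" "T = f ` h ` S"
    unfolding transversals_def by auto
  then have "T = (f \<circ> h) ` S" "\<forall>s\<in>S. (f \<circ> h) s \<in> h s"
    by (auto simp: PiE_dflt_def image_comp)
  then show "T \<in> {g ` S | g. \<forall>s\<in>S. g s \<in> h s}"
    by blast
next
  fix T
  assume "T \<in> {g ` S | g. \<forall>s\<in>S. g s \<in> h s}"
  then obtain g where g: "\<forall>s\<in>S. g s \<in> h s" and T: "T = g ` S"
    by auto
  define f where "f I = (if I \<in> h ` S then g (inv_into S h I) else undefined)" for I
  have f_h: "f (h s) = g s" if "s \<in> S" for s
    using that assms by (simp add: f_def)
  have "f \<in> PiE_dflt (h ` S) undefined (\<lambda>I. I)"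
    using f_h g by (auto simp: PiE_dflt_def f_def)
  moreover have "f ` h ` S = T"
    using f_h T by (auto simp: image_image)
  ultimately show "T \<in> transversals (h ` S)"
    unfolding transversals_def by blast
qed

lemma Sets_sys_eq_pmf_of_set_transversals:
  assumes "finite F" "\<And>I. I \<in> F \<Longrightarrow> finite I \<and> I \<noteq> {}" "disjoint F"
  shows "Sets_sys F = pmf_of_set (transversals F)"
proof -
  let ?P = "PiE_dflt F undefined (\<lambda>I. I)"
  have "inj_on (\<lambda>f. f ` F) ?P"
  proof (rule inj_onI, rule ext)
    fix f f' I
    assume f: "f \<in> ?P" and f': "f' \<in> ?P" and eq: "f ` F = f' ` F"
    show "f I = f' I"
    proof (cases "I \<in> F")
      case True
      then obtain J where J: "J \<in> F" "f I = f' J"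
        using eq by blast
      with f f' True have "f I \<in> I \<inter> J"
        by (auto simp: PiE_dflt_def)
      then have "I = J"
        using \<open>disjoint F\<close> True J(1) by (auto simp: pairwise_def disjnt_def)
      with J show ?thesis
        by simp
    next
      case False
      with f f' show ?thesis
        by (simp add: PiE_dflt_def)
    qed
  qed
  moreover have "?P \<noteq> {}" "finite ?P"
    using assms(1,2) by auto
  ultimately show ?thesis
    unfolding Sets_sys_def transversals_def
    using assms(1,2) by (simp add: Pi_pmf_of_set map_pmf_of_set_inj)
qed

lemma bind_pmf_of_set_fibres:
  assumes "finite K" "K \<noteq> {}"
  shows "bind_pmf (pmf_of_set K) (\<lambda>S. pmf_of_set {T \<in> K. f T = f S}) = pmf_of_set K"
proof (rule pmf_eqI)
  fix T
  define fibre where "fibre S = {T \<in> K. f T = f S}" for S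
  have fibre: "finite (fibre S)" "fibre S \<noteq> {}" if "S \<in> K" for S
    using that assms(1) by (auto simp: fibre_def)
  have "(\<Sum>S\<in>K. pmf (pmf_of_set (fibre S)) T) = indicator K T"
  proof (cases "T \<in> K")
    case True
    have "pmf (pmf_of_set (fibre S)) T = indicator (fibre T) S / card (fibre T)" if "S \<in> K" for S
      using that True fibre[OF that] by (auto simp: fibre_def indicator_def)
    then have "(\<Sum>S\<in>K. pmf (pmf_of_set (fibre S)) T) = card (K \<inter> fibre T) / card (fibre T)"
      using assms(1) by (simp add: sum_divide_distrib[symmetric] indicator_def sum.If_cases Int_def)
    also have "K \<inter> fibre T = fibre T"
      by (auto simp: fibre_def)
    finally show ?thesis
      using True fibre[OF True] by simp
  next
    case False
    then have "pmf (pmf_of_set (fibre S)) T = 0" if "S \<in> K" for S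
      using fibre[OF that] by (simp add: fibre_def)
    with False show ?thesis
      by simp
  qed
  then show "pmf (bind_pmf (pmf_of_set K) (\<lambda>S. pmf_of_set (fibre S))) T = pmf (pmf_of_set K) T"
    using assms by (simp add: pmf_bind_pmf_of_set)
qed

section \<open>Dyadic blocks\<close>

text \<open>Points are 1-based: the level-\<open>l\<close> blocks of \<open>{1..2 ^ m}\<close> are
  \<open>{j * 2 ^ l + 1 .. (j + 1) * 2 ^ l}\<close>, and \<open>dyadic_block l x\<close> is the index \<open>j\<close> of the one
  containing \<open>x\<close>.\<close>

definition dyadic_block :: "nat \<Rightarrow> nat \<Rightarrow> nat" where
  "dyadic_block l x = (x - 1) div 2 ^ l"

definition dyadic_interval :: "nat \<Rightarrow> nat \<Rightarrow> nat set" where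
  "dyadic_interval l x =
     {dyadic_block l x * 2 ^ l + 1 .. dyadic_block l x * 2 ^ l + 2 ^ l}"

lemma nat_div_eq_iff:
  fixes z d :: nat
  assumes "0 < d"
  shows "z div d = b \<longleftrightarrow> b * d \<le> z \<and> z < b * d + d"
proof
  assume "z div d = b"
  then show "b * d \<le> z \<and> z < b * d + d"
    using dividend_less_div_times[OF assms, of z] by auto
next
  assume "b * d \<le> z \<and> z < b * d + d"
  then show "z div d = b"
    by (intro div_nat_eqI) (auto simp: mult.commute)
qed

lemma mem_dyadic_interval:
  "y \<in> dyadic_interval l x \<longleftrightarrow> 1 \<le> y \<and> dyadic_block l y = dyadic_block l x"
  unfolding dyadic_interval_def dyadic_block_def nat_div_eq_iff[OF zero_less_power[OF pos2]]
  by auto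

lemma card_dyadic_interval [simp]: "card (dyadic_interval l x) = 2 ^ l"
  by (simp add: dyadic_interval_def)

lemma finite_dyadic_interval [simp]: "finite (dyadic_interval l x)"
  by (simp add: dyadic_interval_def)

lemma is_interval_dyadic_interval: "is_interval (dyadic_interval l x)"
  unfolding is_interval_def dyadic_interval_def by (intro exI conjI) simp_all

lemma self_mem_dyadic_interval: "1 \<le> x \<Longrightarrow> x \<in> dyadic_interval l x"
  by (simp add: mem_dyadic_interval)

lemma dyadic_interval_eq_of_mem: "y \<in> dyadic_interval l x \<Longrightarrow> dyadic_interval l y = dyadic_interval l x"
  by (subst (asm) mem_dyadic_interval) (simp add: dyadic_interval_def)

lemma dyadic_block_eq_mono:
  assumes "dyadic_block l x = dyadic_block l y" and "l \<le> l'"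
  shows "dyadic_block l' x = dyadic_block l' y"
proof -
  obtain d where "l' = l + d"
    using assms(2) le_Suc_ex by blast
  then have "dyadic_block l' z = dyadic_block l z div 2 ^ d" for z
    by (simp add: dyadic_block_def power_add div_mult2_eq)
  with assms(1) show ?thesis
    by simp
qed

lemma dyadic_interval_subset:
  assumes "x \<in> {1..2 ^ m}" and "l \<le> m"
  shows "dyadic_interval l x \<subseteq> {1..2 ^ m}"
proof
  fix y
  assume "y \<in> dyadic_interval l x"
  then have "1 \<le> y" and "dyadic_block l y = dyadic_block l x"
    by (auto simp: mem_dyadic_interval)
  then have "dyadic_block m y = dyadic_block m x"
    using dyadic_block_eq_mono assms(2) by blast
  also have "\<dots> = 0"
  proof -
    have "x - 1 < 2 ^ m"
      using assms(1) by auto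
    then show ?thesis
      by (simp add: dyadic_block_def)
  qed
  finally show "y \<in> {1..2 ^ m}"
    using \<open>1 \<le> y\<close> by (simp add: dyadic_block_def div_eq_0_iff)
qed

section \<open>Split levels\<close>

definition split_level :: "nat \<Rightarrow> nat set \<Rightarrow> nat \<Rightarrow> nat" where
  "split_level m S s =
     (LEAST l. l = m \<or> (\<exists>s'\<in>S. s' \<noteq> s \<and> dyadic_block l s = dyadic_block l s'))"

lemma split_level_le: "split_level m S s \<le> m"
  unfolding split_level_def by (rule Least_le) simp

lemma split_level_le_shared_block:
  assumes "s' \<in> S" and "s' \<noteq> s" and "dyadic_block l s = dyadic_block l s'"
  shows "split_level m S s \<le> l"
  unfolding split_level_def by (rule Least_le) (use assms in blast)

lemma split_level_cases:
  "split_level m S s = m \<or>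
   (\<exists>s'\<in>S. s' \<noteq> s \<and> dyadic_block (split_level m S s) s = dyadic_block (split_level m S s) s')"
  unfolding split_level_def by (rule LeastI[of _ m]) simp

lemma split_level_pos:
  assumes "1 \<le> m" and "S \<subseteq> {1..}" and "s \<in> S"
  shows "1 \<le> split_level m S s"
proof (rule ccontr)
  assume "\<not> 1 \<le> split_level m S s"
  then have "split_level m S s = 0"
    by simp
  then obtain s' where "s' \<in> S" "s' \<noteq> s" "dyadic_block 0 s = dyadic_block 0 s'"
    using split_level_cases[of m S s] assms(1) by auto
  then have "s - 1 = s' - 1" "1 \<le> s" "1 \<le> s'"
    using assms(2,3) by (auto simp: dyadic_block_def)
  with \<open>s' \<noteq> s\<close> show False
    by linarith
qed

lemma dyadic_block_ne_below_split_level: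
  assumes "s \<in> S" "s' \<in> S" "s \<noteq> s'"
    and "e < split_level m S s" "e' < split_level m S s'"
  shows "dyadic_block (max e e') s \<noteq> dyadic_block (max e e') s'"
proof
  assume eq: "dyadic_block (max e e') s = dyadic_block (max e e') s'"
  show False
  proof (cases "e' \<le> e")
    case True
    then show False
      using split_level_le_shared_block[OF assms(2) assms(3)[symmetric] eq, of m] assms(4) by simp
  next
    case False
    then show False
      using split_level_le_shared_block[OF assms(1) assms(3) eq[symmetric], of m] assms(5) by simp
  qed
qed

lemma disjoint_dyadic_intervals_below_split_level:
  assumes "s \<in> S" "s' \<in> S" "s \<noteq> s'"
    and "e < split_level m S s" "e' < split_level m S s'"
  shows "dyadic_interval e s \<inter> dyadic_interval e' s' = {}"
proof (rule ccontr)
  assume "dyadic_interval e s \<inter> dyadic_interval e' s' \<noteq> {}"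
  then obtain x where x: "dyadic_block e x = dyadic_block e s" "dyadic_block e' x = dyadic_block e' s'"
    by (auto simp: mem_dyadic_interval)
  have "dyadic_block (max e e') x = dyadic_block (max e e') s"
    using x(1) by (rule dyadic_block_eq_mono) simp
  moreover have "dyadic_block (max e e') x = dyadic_block (max e e') s'"
    using x(2) by (rule dyadic_block_eq_mono) simp
  ultimately show False
    using dyadic_block_ne_below_split_level[OF assms] by simp
qed

lemma dyadic_block_eq_iff_below_split_level:
  assumes "s \<in> S" "s' \<in> S" "s \<noteq> s'"
    and "e < split_level m S s" "e' < split_level m S s'"
    and "x \<in> dyadic_interval e s" "y \<in> dyadic_interval e' s'"
  shows "dyadic_block l x = dyadic_block l y \<longleftrightarrow> dyadic_block l s = dyadic_block l s'"
proof -
  have x0: "dyadic_block e x = dyadic_block e s" and y0: "dyadic_block e' y = dyadic_block e' s'"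
    using assms(6,7) by (auto simp: mem_dyadic_interval)
  have x: "dyadic_block l x = dyadic_block l s"
    and y: "dyadic_block l y = dyadic_block l s'" if "max e e' \<le> l" for l
    using dyadic_block_eq_mono[OF x0] dyadic_block_eq_mono[OF y0] that by simp_all
  show ?thesis
  proof (cases "max e e' \<le> l")
    case True
    then show ?thesis
      using x y by simp
  next
    case False
    then have "l \<le> max e e'"
      using nat_le_linear by blast
    note ne = dyadic_block_ne_below_split_level[OF assms(1-5)]
    have "dyadic_block l s \<noteq> dyadic_block l s'"
      using dyadic_block_eq_mono[OF _ \<open>l \<le> max e e'\<close>, of s s'] ne by blast
    moreover have "dyadic_block l x \<noteq> dyadic_block l y"
      using dyadic_block_eq_mono[OF _ \<open>l \<le> max e e'\<close>, of x y] ne x[OF order_refl] y[OF order_refl]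
      by auto
    ultimately show ?thesis
      by simp
  qed
qed

section \<open>The dyadic interval system\<close>

text \<open>Going three levels below the split level costs a factor \<open>8\<close> in the value but leaves
  room for the validity bound.\<close>

definition assigned_interval :: "nat \<Rightarrow> nat set \<Rightarrow> nat \<Rightarrow> nat set" where
  "assigned_interval m S s = dyadic_interval (split_level m S s - 3) s"

definition dyadic_system :: "nat \<Rightarrow> nat set \<Rightarrow> nat set set" where
  "dyadic_system m S = assigned_interval m S ` S"

lemma assigned_level_less_split_level:
  assumes "1 \<le> m" "S \<subseteq> {1..}" "s \<in> S"
  shows "split_level m S s - 3 < split_level m S s"
  using split_level_pos[OF assms] by simp

lemma disjoint_assigned_intervals:
  assumes "1 \<le> m" "S \<subseteq> {1..}" "s \<in> S" "s' \<in> S" "s \<noteq> s'"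
  shows "assigned_interval m S s \<inter> assigned_interval m S s' = {}"
  unfolding assigned_interval_def
  by (rule disjoint_dyadic_intervals_below_split_level[OF assms(3-5)
        assigned_level_less_split_level[OF assms(1-3)] assigned_level_less_split_level[OF assms(1,2,4)]])

lemma inj_on_choice_from_assigned_intervals:
  assumes "1 \<le> m" "S \<subseteq> {1..}" "\<And>s. s \<in> S \<Longrightarrow> g s \<in> assigned_interval m S s"
  shows "inj_on g S"
proof (rule inj_onI, rule ccontr)
  fix s s'
  assume s: "s \<in> S" "s' \<in> S" "g s = g s'" "s \<noteq> s'"
  then have "assigned_interval m S s \<inter> assigned_interval m S s' = {}"
    by (intro disjoint_assigned_intervals[OF assms(1,2)])
  with assms(3)[OF s(1)] assms(3)[OF s(2)] s(3) show False
    by auto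
qed

lemma self_mem_assigned_interval:
  assumes "S \<subseteq> {1..}" "s \<in> S"
  shows "s \<in> assigned_interval m S s"
  unfolding assigned_interval_def using assms by (intro self_mem_dyadic_interval) auto

lemma inj_on_assigned_interval:
  assumes "1 \<le> m" "S \<subseteq> {1..}"
  shows "inj_on (assigned_interval m S) S"
proof (rule inj_onI, rule ccontr)
  fix s s'
  assume s: "s \<in> S" "s' \<in> S" "assigned_interval m S s = assigned_interval m S s'" "s \<noteq> s'"
  then have "assigned_interval m S s \<inter> assigned_interval m S s' = {}"
    by (intro disjoint_assigned_intervals[OF assms])
  with self_mem_assigned_interval[OF assms(2) s(1)] s(3) show False
    by auto
qed

lemma disjoint_dyadic_system:
  assumes "1 \<le> m" "S \<subseteq> {1..}"
  shows "disjoint (dyadic_system m S)"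
  unfolding dyadic_system_def
  by (rule pairwise_imageI) (auto simp: disjnt_def dest: disjoint_assigned_intervals[OF assms])

lemma card_dyadic_system:
  assumes "1 \<le> m" "S \<subseteq> {1..}"
  shows "card (dyadic_system m S) = card S"
  unfolding dyadic_system_def using inj_on_assigned_interval[OF assms] by (rule card_image)

lemma split_level_choice_from_assigned_intervals:
  assumes "1 \<le> m" "S \<subseteq> {1..}" "\<And>s. s \<in> S \<Longrightarrow> g s \<in> assigned_interval m S s"
    and "s \<in> S"
  shows "split_level m (g ` S) (g s) = split_level m S s"
proof -
  have inj: "inj_on g S"
    using inj_on_choice_from_assigned_intervals[OF assms(1-3)] .
  have same_block: "dyadic_block l (g s) = dyadic_block l (g s') \<longleftrightarrow>
      dyadic_block l s = dyadic_block l s'" if "s' \<in> S" "s' \<noteq> s" for l s'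
    using assms(3)[OF assms(4)] assms(3)[OF that(1)] unfolding assigned_interval_def
    by (rule dyadic_block_eq_iff_below_split_level[OF assms(4) that(1) that(2)[symmetric]
          assigned_level_less_split_level[OF assms(1,2,4)]
          assigned_level_less_split_level[OF assms(1,2) that(1)]])
  have "(\<exists>y\<in>g ` S. y \<noteq> g s \<and> dyadic_block l (g s) = dyadic_block l y) \<longleftrightarrow>
        (\<exists>s'\<in>S. s' \<noteq> s \<and> dyadic_block l s = dyadic_block l s')" for l
    using same_block inj_on_eq_iff[OF inj _ assms(4)] by auto
  then show ?thesis
    unfolding split_level_def by simp
qed

lemma dyadic_system_choice_from_assigned_intervals:
  assumes "1 \<le> m" "S \<subseteq> {1..}" "\<And>s. s \<in> S \<Longrightarrow> g s \<in> assigned_interval m S s"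
  shows "dyadic_system m (g ` S) = dyadic_system m S"
  unfolding dyadic_system_def image_image
proof (rule image_cong[OF refl])
  fix s
  assume "s \<in> S"
  then show "assigned_interval m (g ` S) (g s) = assigned_interval m S s"
    using dyadic_interval_eq_of_mem[OF assms(3)[OF \<open>s \<in> S\<close>, unfolded assigned_interval_def]]
      split_level_choice_from_assigned_intervals[OF assms \<open>s \<in> S\<close>]
    by (simp add: assigned_interval_def)
qed

lemma assigned_interval_subset:
  assumes "S \<subseteq> {1..2 ^ m}" "s \<in> S"
  shows "assigned_interval m S s \<subseteq> {1..2 ^ m}"
  unfolding assigned_interval_def
  using assms split_level_le[of m S s] by (intro dyadic_interval_subset) auto

lemma interval_system_dyadic_system:
  assumes "1 \<le> m" "S \<subseteq> {1..2 ^ m}"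
  shows "interval_system (2 ^ m) (card S) (dyadic_system m S)"
proof -
  have S: "S \<subseteq> {1..}" "finite S"
    using assms(2) finite_subset by auto
  show ?thesis
    unfolding interval_system_def
  proof (intro conjI ballI impI)
    show "finite (dyadic_system m S)" "card (dyadic_system m S) = card S"
      using S card_dyadic_system[OF assms(1) S(1)] by (simp_all add: dyadic_system_def)
    show "is_interval I" "I \<subseteq> {1..2 ^ m}" if "I \<in> dyadic_system m S" for I
      using that assigned_interval_subset[OF assms(2)]
      by (auto simp: dyadic_system_def assigned_interval_def is_interval_dyadic_interval)
    show "I \<inter> J = {}" if "I \<in> dyadic_system m S" "J \<in> dyadic_system m S" "I \<noteq> J" for I J
      using that disjoint_dyadic_system[OF assms(1) S(1)] by (auto simp: pairwise_def disjnt_def)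
  qed
qed

lemma sum_dyadic_system:
  assumes "1 \<le> m" "S \<subseteq> {1..}"
  shows "(\<Sum>I\<in>dyadic_system m S. f (card I)) = (\<Sum>s\<in>S. f (2 ^ (split_level m S s - 3)))"
  unfolding dyadic_system_def sum.reindex[OF inj_on_assigned_interval[OF assms]]
  by (simp add: assigned_interval_def)

lemma transversals_dyadic_system:
  assumes "1 \<le> m" "S \<subseteq> {1..2 ^ m}"
  shows "transversals (dyadic_system m S) =
    {T. T \<subseteq> {1..2 ^ m} \<and> card T = card S \<and> dyadic_system m T = dyadic_system m S}"
    (is "_ = ?fibre")
proof -
  have pos: "T \<subseteq> {1..}" if "T \<subseteq> {1..2 ^ m}" for T :: "nat set"
    using that by auto
  have transversals: "transversals (dyadic_system m T) =
      {g ` T | g. \<forall>s\<in>T. g s \<in> assigned_interval m T s}" if "T \<subseteq> {1..2 ^ m}" for T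
    unfolding dyadic_system_def
    by (rule transversals_image[OF inj_on_assigned_interval[OF assms(1) pos[OF that]]])
  show ?thesis
  proof (intro equalityI subsetI)
    fix T
    assume "T \<in> transversals (dyadic_system m S)"
    then obtain g where g: "\<And>s. s \<in> S \<Longrightarrow> g s \<in> assigned_interval m S s" and T: "T = g ` S"
      unfolding transversals[OF assms(2)] by auto
    have "T \<subseteq> {1..2 ^ m}"
      using g assigned_interval_subset[OF assms(2)] T by blast
    moreover have "card T = card S"
      using card_image[OF inj_on_choice_from_assigned_intervals[OF assms(1) pos[OF assms(2)] g]] T
      by simp
    moreover have "dyadic_system m T = dyadic_system m S"
      using dyadic_system_choice_from_assigned_intervals[OF assms(1) pos[OF assms(2)] g] T by simp
    ultimately show "T \<in> ?fibre"
      by simp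
  next
    fix T
    assume T: "T \<in> ?fibre"
    then have T_sub: "T \<subseteq> {1..2 ^ m}"
      by simp
    have "T = (\<lambda>s. s) ` T" "\<forall>s\<in>T. s \<in> assigned_interval m T s"
      using self_mem_assigned_interval[OF pos[OF T_sub]] by auto
    then have "T \<in> transversals (dyadic_system m T)"
      unfolding transversals[OF T_sub] by blast
    with T show "T \<in> transversals (dyadic_system m S)"
      by simp
  qed
qed

lemma perfect_dyadic_system:
  assumes "1 \<le> m" "k \<le> 2 ^ m"
  shows "perfect (2 ^ m) k (map_pmf (dyadic_system m) (pmf_of_set {S. S \<subseteq> {1..2 ^ m} \<and> card S = k}))"
proof -
  define K :: "nat set set" where "K = {S. S \<subseteq> {1..2 ^ m} \<and> card S = k}"
  have "finite K"
    unfolding K_def by simp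
  moreover have "K \<noteq> {}"
    using obtain_subset_with_card_n[of k "{1..(2::nat) ^ m}"] assms(2) unfolding K_def by auto
  ultimately have "Sets_rand (map_pmf (dyadic_system m) (pmf_of_set K)) =
      bind_pmf (pmf_of_set K) (\<lambda>S. pmf_of_set {T \<in> K. dyadic_system m T = dyadic_system m S})"
    unfolding Sets_rand_def bind_map_pmf
  proof (intro bind_pmf_cong refl)
    fix S
    assume "S \<in> set_pmf (pmf_of_set K)"
    with \<open>finite K\<close> \<open>K \<noteq> {}\<close> have S: "S \<subseteq> {1..2 ^ m}" "card S = k"
      by (auto simp: K_def)
    have "S \<subseteq> {1..}" "finite S"
      using S(1) finite_subset by auto
    then have "Sets_sys (dyadic_system m S) = pmf_of_set (transversals (dyadic_system m S))"
      by (intro Sets_sys_eq_pmf_of_set_transversals disjoint_dyadic_system[OF assms(1)])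
        (auto simp: dyadic_system_def assigned_interval_def dyadic_interval_def)
    also have "transversals (dyadic_system m S) = {T \<in> K. dyadic_system m T = dyadic_system m S}"
      unfolding transversals_dyadic_system[OF assms(1) S(1)] K_def S(2) by blast
    finally show "Sets_sys (dyadic_system m S) =
        pmf_of_set {T \<in> K. dyadic_system m T = dyadic_system m S}" .
  qed
  also have "\<dots> = pmf_of_set K"
    by (rule bind_pmf_of_set_fibres[OF \<open>finite K\<close> \<open>K \<noteq> {}\<close>])
  finally show ?thesis
    unfolding perfect_def K_def .
qed

text \<open>The blocks one level below the split levels are pairwise disjoint.\<close>

lemma sum_pow_split_level_le:
  assumes "1 \<le> m" "S \<subseteq> {1..2 ^ m}"
  shows "(\<Sum>s\<in>S. 2 ^ (split_level m S s - 1)) \<le> (2::nat) ^ m"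
proof -
  define B where "B s = dyadic_interval (split_level m S s - 1) s" for s
  have S: "S \<subseteq> {1..}" "finite S"
    using assms(2) finite_subset by auto
  have "B s \<inter> B s' = {}" if "s \<in> S" "s' \<in> S" "s \<noteq> s'" for s s'
    unfolding B_def using split_level_pos[OF assms(1) S(1) that(1)] split_level_pos[OF assms(1) S(1) that(2)]
    by (intro disjoint_dyadic_intervals_below_split_level[OF that, of _ m]) auto
  then have "(\<Sum>s\<in>S. card (B s)) = card (\<Union>s\<in>S. B s)"
    using S(2) by (intro card_UN_disjoint[symmetric]) (auto simp: B_def)
  also have "\<dots> \<le> card {1..(2::nat) ^ m}"
  proof (intro card_mono UN_least)
    fix s
    assume "s \<in> S"
    then show "B s \<subseteq> {1..2 ^ m}"
      unfolding B_def using assms(2) split_level_le[of m S s] by (intro dyadic_interval_subset) auto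
  qed simp
  finally show ?thesis
    by (simp add: B_def)
qed

lemma valid_sys_dyadic_system:
  assumes "1 \<le> m" "S \<subseteq> {1..2 ^ m}" "4 * card S \<le> 2 ^ m"
  shows "valid_sys (2 ^ m) (dyadic_system m S)"
proof -
  have S: "S \<subseteq> {1..}"
    using assms(2) by auto
  have "4 * 2 ^ (split_level m S s - 3) \<le> 2 ^ (split_level m S s - 1) + (4::nat)" for s
  proof (cases "3 \<le> split_level m S s")
    case True
    then have "split_level m S s - 1 = (split_level m S s - 3) + 2"
      by simp
    then show ?thesis
      by (simp add: power_add)
  qed simp
  then have "(4::nat) * (\<Sum>s\<in>S. 2 ^ (split_level m S s - 3)) \<le> (\<Sum>s\<in>S. 2 ^ (split_level m S s - 1) + 4)"
    by (simp add: sum_distrib_left sum_mono)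
  also have "\<dots> = (\<Sum>s\<in>S. 2 ^ (split_level m S s - 1)) + 4 * card S"
    by (simp add: sum.distrib)
  also have "\<dots> \<le> 2 * 2 ^ m"
    using sum_pow_split_level_le[OF assms(1,2)] assms(3) by simp
  finally have "2 * (\<Sum>I\<in>dyadic_system m S. card I) \<le> (2::nat) ^ m"
    using sum_dyadic_system[OF assms(1) S, of "\<lambda>n. n"] by simp
  then have "2 * real (\<Sum>I\<in>dyadic_system m S. card I) \<le> 2 ^ m"
    by (metis of_nat_le_iff of_nat_mult of_nat_numeral of_nat_power)
  then show ?thesis
    unfolding valid_sys_def of_nat_power of_nat_numeral by linarith
qed

definition dyadic_affinity :: "nat \<Rightarrow> nat \<Rightarrow> nat \<Rightarrow> real" where
  "dyadic_affinity m x y = (\<Sum>l = 1..m. if dyadic_block l x = dyadic_block l y then 1 / 2 ^ l else 0)"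

lemma dyadic_affinity_nonneg: "0 \<le> dyadic_affinity m x y"
  unfolding dyadic_affinity_def by (intro sum_nonneg) auto

lemma sum_dyadic_affinity_le:
  assumes "finite U" "U \<subseteq> {1..}"
  shows "(\<Sum>y\<in>U. dyadic_affinity m x y) \<le> m"
proof -
  have "(\<Sum>y\<in>U. if dyadic_block l x = dyadic_block l y then 1 / 2 ^ l else 0) \<le> (1::real)" for l
  proof -
    have "{y \<in> U. dyadic_block l x = dyadic_block l y} \<subseteq> dyadic_interval l x"
      using assms(2) by (auto simp: mem_dyadic_interval)
    then have "card {y \<in> U. dyadic_block l x = dyadic_block l y} \<le> card (dyadic_interval l x)"
      by (intro card_mono) simp_all
    then have "real (card {y \<in> U. dyadic_block l x = dyadic_block l y}) \<le> 2 ^ l"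
      by (metis card_dyadic_interval of_nat_le_iff of_nat_numeral of_nat_power)
    then have "real (card {y \<in> U. dyadic_block l x = dyadic_block l y}) / 2 ^ l \<le> 1"
      by simp
    then show ?thesis
      using assms(1) by (simp add: sum.If_cases Int_def)
  qed
  then have "(\<Sum>l = 1..m. \<Sum>y\<in>U. if dyadic_block l x = dyadic_block l y then 1 / 2 ^ l else 0) \<le> (\<Sum>l = 1..m. (1::real))"
    by (intro sum_mono)
  then show ?thesis
    unfolding dyadic_affinity_def by (simp add: sum.swap[of _ U])
qed

text \<open>Unless it is \<open>m\<close>, the split level \<open>l\<close> of \<open>s\<close> is a level at which \<open>s\<close> shares its
  block with another point of \<open>S\<close>, and that pair contributes \<open>1 / 2 ^ l\<close> to the affinity.\<close>

lemma inverse_pow_split_level_le: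
  assumes "1 \<le> m" "S \<subseteq> {1..}" "finite S" "s \<in> S"
  shows "1 / 2 ^ split_level m S s \<le> 1 / 2 ^ m + (\<Sum>s'\<in>S - {s}. dyadic_affinity m s s')"
proof (cases "split_level m S s = m")
  case True
  then show ?thesis
    using sum_nonneg[of "S - {s}" "dyadic_affinity m s", OF dyadic_affinity_nonneg] by simp
next
  case False
  define l where "l = split_level m S s"
  obtain s' where s': "s' \<in> S" "s' \<noteq> s" "dyadic_block l s = dyadic_block l s'"
    using split_level_cases[of m S s] False unfolding l_def by auto
  have "l \<in> {1..m}"
    using split_level_pos[OF assms(1,2,4)] split_level_le[of m S s] unfolding l_def by simp
  then have "(if dyadic_block l s = dyadic_block l s' then 1 / 2 ^ l else 0) \<le> dyadic_affinity m s s'"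
    unfolding dyadic_affinity_def by (intro member_le_sum) auto
  then have "1 / 2 ^ l \<le> dyadic_affinity m s s'"
    using s'(3) by simp
  also have "\<dots> \<le> (\<Sum>s'\<in>S - {s}. dyadic_affinity m s s')"
    using s' assms(3) dyadic_affinity_nonneg by (intro member_le_sum) auto
  finally show ?thesis
    unfolding l_def by (simp add: add_increasing)
qed

lemma val_sys_dyadic_system_le:
  assumes "1 \<le> m" "S \<subseteq> {1..}" "finite S"
  shows "val_sys (dyadic_system m S) \<le>
    8 * card S / 2 ^ m + 8 * (\<Sum>s\<in>S. \<Sum>s'\<in>S - {s}. dyadic_affinity m s s')"
proof -
  have "1 / 2 ^ (split_level m S s - 3) \<le> 8 * (1 / (2::real) ^ split_level m S s)" for s
  proof (cases "3 \<le> split_level m S s")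
    case True
    then have "split_level m S s = (split_level m S s - 3) + 3"
      by simp
    then have "(2::real) ^ split_level m S s = 2 ^ (split_level m S s - 3) * 2 ^ 3"
      by (metis power_add)
    then show ?thesis
      by simp
  next
    case False
    then have "(2::real) ^ split_level m S s \<le> 2 ^ 3"
      by (intro power_increasing) auto
    with False show ?thesis
      by (simp add: field_simps)
  qed
  also have "\<dots> s \<le> 8 * (1 / 2 ^ m + (\<Sum>s'\<in>S - {s}. dyadic_affinity m s s'))" if "s \<in> S" for s
    using inverse_pow_split_level_le[OF assms that] by simp
  finally have "(\<Sum>s\<in>S. 1 / 2 ^ (split_level m S s - 3)) \<le>
      (\<Sum>s\<in>S. 8 * (1 / 2 ^ m + (\<Sum>s'\<in>S - {s}. dyadic_affinity m s s')))"
    by (intro sum_mono)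
  then show ?thesis
    unfolding val_sys_def sum_dyadic_system[OF assms(1,2), of "\<lambda>n. 1 / real n"]
    by (simp add: sum.distrib sum_distrib_left mult.commute)
qed

lemma expectation_sum_pairs_dyadic_affinity_le:
  assumes "k \<le> 2 ^ m"
  shows "measure_pmf.expectation (pmf_of_set {S. S \<subseteq> {1..2 ^ m} \<and> card S = k})
      (\<lambda>S. \<Sum>s\<in>S. \<Sum>s'\<in>S - {s}. dyadic_affinity m s s') \<le> real k * (real k - 1) * m / (2 ^ m - 1)"
proof -
  define U :: "nat set" where "U = {1..2 ^ m}"
  define c where "c = real k * (real k - 1) / (2 ^ m * (2 ^ m - 1))"
  have "measure_pmf.expectation (pmf_of_set {S. S \<subseteq> U \<and> card S = k})
      (\<lambda>S. \<Sum>s\<in>S. \<Sum>s'\<in>S - {s}. dyadic_affinity m s s') =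
      c * (\<Sum>x\<in>U. \<Sum>y\<in>U - {x}. dyadic_affinity m x y)"
    using expectation_sum_pairs_uniform_subset[of U k "dyadic_affinity m"] assms
    by (simp add: U_def c_def)
  also have "\<dots> \<le> c * (2 ^ m * m)"
  proof (rule mult_left_mono)
    have "(\<Sum>x\<in>U. \<Sum>y\<in>U - {x}. dyadic_affinity m x y) \<le> (\<Sum>x\<in>U. real m)"
      by (intro sum_mono sum_dyadic_affinity_le) (auto simp: U_def)
    then show "(\<Sum>x\<in>U. \<Sum>y\<in>U - {x}. dyadic_affinity m x y) \<le> 2 ^ m * m"
      by (simp add: U_def)
    show "0 \<le> c"
      unfolding c_def using one_le_power[of "2::real" m] by (cases k) auto
  qed
  also have "\<dots> = real k * (real k - 1) * m / (2 ^ m - 1)"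
    by (simp add: c_def)
  finally show ?thesis
    by (simp add: U_def)
qed

lemma val_rand_dyadic_system_le:
  assumes "1 \<le> m" "k \<le> 2 ^ m"
  shows "val_rand (map_pmf (dyadic_system m) (pmf_of_set {S. S \<subseteq> {1..2 ^ m} \<and> card S = k})) \<le>
    8 * real k / 2 ^ m + 8 * (real k * (real k - 1) * m / (2 ^ m - 1))"
proof -
  define K :: "nat set set" where "K = {S. S \<subseteq> {1..2 ^ m} \<and> card S = k}"
  define pairs where "pairs S = (\<Sum>s\<in>S. \<Sum>s'\<in>S - {s}. dyadic_affinity m s s')" for S
  have "finite K" "K \<noteq> {}"
    using obtain_subset_with_card_n[of k "{1..(2::nat) ^ m}"] assms(2) by (auto simp: K_def)
  then have integrable: "integrable (measure_pmf (pmf_of_set K)) g" for g :: "nat set \<Rightarrow> real"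
    by (simp add: integrable_measure_pmf_finite)
  have "val_sys (dyadic_system m S) \<le> 8 * real k / 2 ^ m + 8 * pairs S" if "S \<in> K" for S
  proof -
    have S: "S \<subseteq> {1..}" "finite S" "card S = k"
      using that finite_subset[of S "{1..2 ^ m}"] by (auto simp: K_def)
    then show ?thesis
      using val_sys_dyadic_system_le[OF assms(1) S(1,2)] by (simp add: pairs_def)
  qed
  with \<open>finite K\<close> \<open>K \<noteq> {}\<close> have "measure_pmf.expectation (pmf_of_set K) (\<lambda>S. val_sys (dyadic_system m S))
      \<le> measure_pmf.expectation (pmf_of_set K) (\<lambda>S. 8 * real k / 2 ^ m + 8 * pairs S)"
    by (intro integral_mono_AE integrable) (simp add: AE_measure_pmf_iff)
  also have "\<dots> = 8 * real k / 2 ^ m + 8 * measure_pmf.expectation (pmf_of_set K) pairs"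
    using integrable by simp
  also have "\<dots> \<le> 8 * real k / 2 ^ m + 8 * (real k * (real k - 1) * m / (2 ^ m - 1))"
    using expectation_sum_pairs_dyadic_affinity_le[OF assms(2)] unfolding K_def pairs_def[abs_def]
    by simp
  finally show ?thesis
    by (simp add: val_rand_def K_def)
qed

lemma value_bound_arithmetic:
  fixes k t m :: real
  assumes "1 \<le> k" "5 \<le> t" "1 \<le> m"
  shows "8 * k / t + 8 * (k * (k - 1) * m / (t - 1)) \<le> 10 * k\<^sup>2 * m / t"
proof -
  have "8 * k * (t - 1) \<le> 8 * k * m * t"
    using assms by (simp add: mult_mono)
  moreover have "0 \<le> 2 * k * k * m * (t - 5)"
    using assms by simp
  ultimately have "8 * k * (t - 1) + 8 * (k * (k - 1) * m) * t \<le> 10 * k\<^sup>2 * m * (t - 1)"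
    by (simp add: power2_eq_square algebra_simps)
  moreover have "0 < t" "0 < t - 1"
    using assms(2) by simp_all
  ultimately have "(8 * k * (t - 1) + 8 * (k * (k - 1) * m) * t) / (t * (t - 1)) \<le>
      10 * k\<^sup>2 * m * (t - 1) / (t * (t - 1))"
    by (intro divide_right_mono) simp_all
  moreover have "8 * k / t + 8 * (k * (k - 1) * m / (t - 1)) =
      (8 * k * (t - 1) + 8 * (k * (k - 1) * m) * t) / (t * (t - 1))"
    "10 * k\<^sup>2 * m * (t - 1) / (t * (t - 1)) = 10 * k\<^sup>2 * m / t"
    using \<open>0 < t\<close> \<open>0 < t - 1\<close> by (simp_all add: field_simps)
  ultimately show ?thesis
    by simp
qed

theorem mainTheorem15:
  fixes k t :: nat
  assumes "k \<ge> 1" and "t \<ge> 1" and "\<exists>m. t = 2 ^ m" and "real k \<le> real t / 6"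
  shows "\<exists>\<F> :: nat set set pmf.
           (\<forall>F\<in>set_pmf \<F>. interval_system t k F) \<and>
           valid_rand t \<F> \<and> perfect t k \<F> \<and>
           val_rand \<F> \<le> 10 * real k ^ 2 * log 2 (real t) / real t"
proof -
  obtain m where t: "t = 2 ^ m"
    using assms(3) by blast
  have "6 * k \<le> t"
    using assms(4) by simp
  then have "2 ^ 2 < (2::nat) ^ m"
    using assms(1) t by simp
  then have "3 \<le> m"
    using power_less_imp_less_exp[of "2::nat" 2 m] by simp
  then have "8 \<le> t"
    using t power_increasing[of 3 m "2::nat"] by simp
  have m: "1 \<le> m" "k \<le> 2 ^ m" "4 * k \<le> 2 ^ m"
    using \<open>3 \<le> m\<close> \<open>6 * k \<le> t\<close> t by simp_all
  define K :: "nat set set" where "K = {S. S \<subseteq> {1..2 ^ m} \<and> card S = k}"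
  define \<F> where "\<F> = map_pmf (dyadic_system m) (pmf_of_set K)"
  have "finite K" "K \<noteq> {}"
    using obtain_subset_with_card_n[of k "{1..(2::nat) ^ m}"] m(2) by (auto simp: K_def)
  then have set_\<F>: "set_pmf \<F> = dyadic_system m ` K"
    by (simp add: \<F>_def)
  have "interval_system t k F \<and> valid_sys t F" if F: "F \<in> set_pmf \<F>" for F
  proof -
    obtain S where "S \<in> K" and F: "F = dyadic_system m S"
      using F unfolding set_\<F> by blast
    then have S: "S \<subseteq> {1..2 ^ m}" "card S = k"
      by (simp_all add: K_def)
    show ?thesis
      using interval_system_dyadic_system[OF m(1) S(1)] valid_sys_dyadic_system[OF m(1) S(1)] m(3)
      unfolding F t S(2) by blast
  qed
  then have "\<forall>F\<in>set_pmf \<F>. interval_system t k F" "valid_rand t \<F>"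
    unfolding valid_rand_def by simp_all
  moreover have "perfect t k \<F>"
    unfolding \<F>_def K_def t by (rule perfect_dyadic_system[OF m(1,2)])
  moreover have "val_rand \<F> \<le> 10 * real k ^ 2 * log 2 (real t) / real t"
  proof -
    have "val_rand \<F> \<le> 8 * real k / t + 8 * (real k * (real k - 1) * m / (real t - 1))"
      unfolding \<F>_def K_def t using val_rand_dyadic_system_le[OF m(1,2)] by simp
    also have "\<dots> \<le> 10 * real k ^ 2 * m / t"
      using assms(1) \<open>8 \<le> t\<close> \<open>3 \<le> m\<close> by (intro value_bound_arithmetic) simp_all
    also have "real m = log 2 (real t)"
      unfolding t by (simp add: log_nat_power)
    finally show ?thesis .
  qed
  ultimately show ?thesis
    by (intro exI[of _ \<F>]) simp
qed

end
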